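(* For every $K>0$ there is a constant $C_1>0$ such that for every finite set $A\subset\mathbb{R}$ with $|A(A+A+A+A)|\le K|A|^2$, we have $|A+A|\le C_1|A|^{3/2}$.
   Context: $A+A=\{a+b:a,b\in A\}$ and $A(A+A+A+A)=\{a(b+c+d+e):a,b,c,d,e\in A\}$. *)

theory Defs
  imports Complex_Main
begin

definition sumset :: "real set \<Rightarrow> real set" where
  "sumset A = {a + b | a b. a \<in> A \<and> b \<in> A}"

definition prod_quad_sumset :: "real set \<Rightarrow> real set" where
  "prod_quad_sumset A = {a * (b + c + d + e) | a b c d e.
     a \<in> A \<and> b \<in> A \<and> c \<in> A \<and> d \<in> A \<and> e \<in> A}"

end

theory Submission
  imports Defs
begin

(* Let P = A(A+A+A+A) and enumerate A+A as d_0 < ... < d_(s-1). For a > 0 in A and d in A+A the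
   points a(d_k + d) lie in P in increasing order, so the s - 1 gaps between consecutive ones contain
   at most |P| points of P altogether, and for a threshold T of order |P|/s most gaps contain fewer
   than T of them. Such a short gap is determined by its index k, its left endpoint and its number
   of points of P: these fix the right endpoint, hence a(d_(k+1) - d_k), hence a and d. Counting
   short gaps gives |A_+| s^2 <~ |P|^2; the negative elements are handled by reflecting A+A, so
   |A| s^2 <~ |P|^2 <= K^2 |A|^4, i.e. s <~ K |A|^(3/2). *)

lemma sumset_eq_image: "sumset A = (\<lambda>(a, b). a + b) ` (A \<times> A)"
  unfolding sumset_def by auto

lemma finite_sumset: "finite A \<Longrightarrow> finite (sumset A)"
  by (simp add: sumset_eq_image)

lemma card_sumset_le: "finite A \<Longrightarrow> card (sumset A) \<le> card A ^ 2"
  unfolding sumset_eq_image power2_eq_square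
  by (metis card_cartesian_product card_image_le finite_SigmaI)

lemma finite_prod_quad_sumset:
  assumes "finite A"
  shows "finite (prod_quad_sumset A)"
proof (rule finite_subset)
  show "prod_quad_sumset A \<subseteq> (\<lambda>(a, b, c, d, e). a * (b + c + d + e)) ` (A \<times> A \<times> A \<times> A \<times> A)"
  proof
    fix x assume "x \<in> prod_quad_sumset A"
    then obtain a b c d e where x: "x = a * (b + c + d + e)"
      and mem: "(a, b, c, d, e) \<in> A \<times> A \<times> A \<times> A \<times> A"
      unfolding prod_quad_sumset_def by blast
    from mem show "x \<in> (\<lambda>(a, b, c, d, e). a * (b + c + d + e)) ` (A \<times> A \<times> A \<times> A \<times> A)"
      by (rule rev_image_eqI) (simp add: x)
  qed
qed (use assms in simp)

lemma mult_add_sumset_mem_prod_quad_sumset: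
  assumes "a \<in> A" "x \<in> sumset A" "y \<in> sumset A"
  shows "a * (x + y) \<in> prod_quad_sumset A"
proof -
  obtain b c d e where "x = b + c" "y = d + e" "b \<in> A" "c \<in> A" "d \<in> A" "e \<in> A"
    using assms(2,3) unfolding sumset_def by blast
  then show ?thesis
    unfolding prod_quad_sumset_def using assms(1) by (force simp: add.assoc)
qed

lemma card_inter_greaterThanAtMost_inj:
  fixes P :: "'a::linorder set"
  assumes "finite P" "u \<in> P" "v \<in> P" "y < u" "y < v"
    and "card (P \<inter> {y<..u}) = card (P \<inter> {y<..v})"
  shows "u = v"
proof (rule ccontr)
  have less: "card (P \<inter> {y<..u}) < card (P \<inter> {y<..v})"
    if "v \<in> P" "y < v" "u < v" for u v
  proof -
    have "P \<inter> {y<..u} \<subseteq> P \<inter> {y<..v}" using \<open>u < v\<close> by auto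
    moreover have "v \<in> P \<inter> {y<..v}" "v \<notin> P \<inter> {y<..u}" using that by auto
    ultimately have "P \<inter> {y<..u} \<subset> P \<inter> {y<..v}" by blast
    then show ?thesis using \<open>finite P\<close> by (simp add: psubset_card_mono)
  qed
  assume "u \<noteq> v"
  then consider "u < v" | "v < u" by (meson neq_iff)
  then show False
    using less[of v u] less[of u v] assms by cases auto
qed

lemma sum_card_inter_consecutive_intervals_le:
  fixes P :: "'a::linorder set" and z :: "nat \<Rightarrow> 'a"
  assumes "finite P" and "mono_on {..m} z"
  shows "(\<Sum>k<m. card (P \<inter> {z k<..z (Suc k)})) \<le> card P"
proof -
  let ?I = "\<lambda>k. P \<inter> {z k<..z (Suc k)}"
  have before: "?I i \<inter> ?I j = {}" if "i < j" "j < m" for i j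
    using mono_onD[OF assms(2), of "Suc i" j] that by auto
  have disjoint: "\<forall>i\<in>{..<m}. \<forall>j\<in>{..<m}. i \<noteq> j \<longrightarrow> ?I i \<inter> ?I j = {}"
  proof (intro ballI impI)
    fix i j assume "i \<in> {..<m}" "j \<in> {..<m}" "i \<noteq> j"
    then consider "i < j" "j < m" | "j < i" "i < m" by fastforce
    then show "?I i \<inter> ?I j = {}"
      by cases (use before[of i j] before[of j i] in \<open>simp_all add: Int_commute\<close>)
  qed
  have "(\<Sum>k<m. card (?I k)) = card (\<Union>k<m. ?I k)"
    using card_UN_disjoint[OF _ _ disjoint] \<open>finite P\<close> by simp
  also have "\<dots> \<le> card P"
    using \<open>finite P\<close> by (intro card_mono) auto
  finally show ?thesis .
qed

lemma card_ge_threshold_mult_le_sum: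
  fixes f :: "'i \<Rightarrow> nat"
  assumes "finite I"
  shows "card {k \<in> I. T \<le> f k} * T \<le> (\<Sum>k\<in>I. f k)"
proof -
  have "card {k \<in> I. T \<le> f k} * T = (\<Sum>k \<in> {k \<in> I. T \<le> f k}. T)" by simp
  also have "\<dots> \<le> (\<Sum>k \<in> {k \<in> I. T \<le> f k}. f k)" by (rule sum_mono) simp
  also have "\<dots> \<le> (\<Sum>k\<in>I. f k)" using assms by (intro sum_mono2) auto
  finally show ?thesis .
qed

lemma threshold_choice:
  fixes b m L :: real
  assumes "0 < m" "m \<le> L" "0 \<le> b"
    and bound: "\<And>T. (0::nat) < T \<Longrightarrow> b * (m * T - L) \<le> m * L * T ^ 2"
  shows "b * m \<le> 6 * L ^ 2"
proof -
  define T where "T = nat \<lceil>2 * L / m\<rceil>"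
  have lower: "2 * L \<le> m * T"
    using real_nat_ceiling_ge[of "2 * L / m"] \<open>0 < m\<close>
    by (simp add: T_def field_simps)
  have "real T = of_int \<lceil>2 * L / m\<rceil>"
    using assms(1,2) by (simp add: T_def)
  then have "real T \<le> 2 * L / m + 1"
    using ceiling_correct[of "2 * L / m"] by linarith
  also have "\<dots> \<le> 3 * L / m"
    using assms(1,2) by (simp add: field_simps)
  finally have upper: "m * T \<le> 3 * L"
    using \<open>0 < m\<close> by (simp add: field_simps)
  have "0 < T"
    using lower assms(1,2) by (cases T) auto
  have "b * (m * T) \<le> 2 * (b * (m * T - L))"
    using mult_left_mono[OF lower \<open>0 \<le> b\<close>] by (simp add: algebra_simps)
  also have "\<dots> \<le> 2 * m * L * T * T"
    using bound[OF \<open>0 < T\<close>] by (simp add: power2_eq_square)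
  finally have "(b * m) * T \<le> (2 * L * (m * T)) * T"
    by (simp add: algebra_simps)
  then have "b * m \<le> 2 * L * (m * T)"
    using \<open>0 < T\<close> by (simp add: mult_le_cancel_right)
  also have "\<dots> \<le> 2 * L * (3 * L)"
    using upper assms(1,2) by (intro mult_left_mono) auto
  finally show ?thesis by (simp add: power2_eq_square)
qed

locale scaled_shifts =
  fixes B D P :: "real set"
  assumes finite_B: "finite B" and finite_D: "finite D" and finite_P: "finite P"
    and B_pos: "a \<in> B \<Longrightarrow> 0 < a"
    and scaled_shift_mem: "a \<in> B \<Longrightarrow> x \<in> D \<Longrightarrow> d \<in> D \<Longrightarrow> a * (x + d) \<in> P"
begin

definition point :: "nat \<Rightarrow> real" where
  "point k = sorted_list_of_set D ! k"

lemma point_mem: "k < card D \<Longrightarrow> point k \<in> D"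
  using finite_D nth_mem[of k "sorted_list_of_set D"] by (simp add: point_def)

lemma point_strict_mono: "i < j \<Longrightarrow> j < card D \<Longrightarrow> point i < point j"
  using sorted_wrt_nth_less[OF sorted_list_of_set.strict_sorted_key_list_of_set, of i j D]
  by (simp add: point_def)

lemma card_D_le_card_P:
  assumes "B \<noteq> {}"
  shows "card D \<le> card P"
proof (cases "D = {}")
  case False
  obtain a d where "a \<in> B" "d \<in> D" using assms False by blast
  then have "inj_on (\<lambda>x. a * (x + d)) D" "(\<lambda>x. a * (x + d)) ` D \<subseteq> P"
    using B_pos scaled_shift_mem by (auto simp: inj_on_def)
  then show ?thesis using finite_P by (rule card_inj_on_le)
qed simp

definition gap :: "real \<Rightarrow> real \<Rightarrow> nat \<Rightarrow> nat" where
  "gap a d k = card (P \<inter> {a * (point k + d)<..a * (point (Suc k) + d)})"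

lemma sum_gap_le:
  assumes "a \<in> B" "d \<in> D"
  shows "(\<Sum>k<card D - 1. gap a d k) \<le> card P"
proof -
  have "card D > 0" using assms finite_D card_gt_0_iff by blast
  then have "mono_on {..card D - 1} (\<lambda>k. a * (point k + d))"
    using point_strict_mono B_pos[OF assms(1)]
    by (auto intro!: mono_onI simp: le_less)
  then show ?thesis
    unfolding gap_def by (rule sum_card_inter_consecutive_intervals_le[OF finite_P])
qed

definition short_gaps :: "nat \<Rightarrow> ((real \<times> real) \<times> nat) set" where
  "short_gaps T = (SIGMA (a, d):B \<times> D. {k. k < card D - 1 \<and> gap a d k < T})"

lemma card_short_gaps_ge:
  "card B * card D * (card D - 1) * T \<le> card (short_gaps T) * T + card B * card D * card P"
proof -
  have per_pair: "(card D - 1) * T \<le> card {k. k < card D - 1 \<and> gap a d k < T} * T + card P"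
    if "a \<in> B" "d \<in> D" for a d
  proof -
    define short where "short = {k. k < card D - 1 \<and> gap a d k < T}"
    define long where "long = {k \<in> {..<card D - 1}. T \<le> gap a d k}"
    have "short \<union> long = {..<card D - 1}" unfolding short_def long_def by auto
    then have "card D - 1 \<le> card short + card long"
      using card_Un_le[of short long] by simp
    then have "(card D - 1) * T \<le> card short * T + card long * T"
      by (metis add_mult_distrib mult_le_mono1)
    also have "card long * T \<le> card P"
      using card_ge_threshold_mult_le_sum[of "{..<card D - 1}" T "gap a d"] sum_gap_le[OF that]
      unfolding long_def by simp
    finally show ?thesis unfolding short_def by simp
  qed
  have "card B * card D * (card D - 1) * T = (\<Sum>_\<in>B \<times> D. (card D - 1) * T)"
    by (simp add: card_cartesian_product)
  also have "\<dots> \<le> (\<Sum>(a, d)\<in>B \<times> D. card {k. k < card D - 1 \<and> gap a d k < T} * T + card P)"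
    using per_pair by (intro sum_mono) auto
  also have "\<dots> = card (short_gaps T) * T + card B * card D * card P"
    using finite_B finite_D
    by (simp add: short_gaps_def sum.distrib sum_distrib_right card_cartesian_product
        case_prod_beta)
  finally show ?thesis .
qed

lemma gap_determines_scaled_shift:
  assumes "a \<in> B" "a' \<in> B" "d \<in> D" "d' \<in> D" "Suc k < card D"
    and left: "a * (point k + d) = a' * (point k + d')"
    and "gap a d k = gap a' d' k"
  shows "a = a'" and "d = d'"
proof -
  have step: "point k < point (Suc k)" using point_strict_mono assms(5) by simp
  have pos: "0 < a" "0 < a'" using B_pos assms(1,2) by auto
  have "a * (point (Suc k) + d) = a' * (point (Suc k) + d')"
  proof (rule card_inter_greaterThanAtMost_inj[OF finite_P])
    show "a * (point (Suc k) + d) \<in> P" "a' * (point (Suc k) + d') \<in> P"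
      using assms(1-5) point_mem scaled_shift_mem by auto
    show "a * (point k + d) < a * (point (Suc k) + d)"
      using step pos by simp
    have "a' * (point k + d') < a' * (point (Suc k) + d')"
      using step pos by simp
    then show "a * (point k + d) < a' * (point (Suc k) + d')"
      using left by simp
    show "card (P \<inter> {a * (point k + d)<..a * (point (Suc k) + d)}) =
        card (P \<inter> {a * (point k + d)<..a' * (point (Suc k) + d')})"
      using assms(7) left by (simp add: gap_def)
  qed
  then have "a * (point (Suc k) - point k) = a' * (point (Suc k) - point k)"
    using left by (simp add: algebra_simps)
  then show "a = a'" using step by simp
  then show "d = d'" using left pos by simp
qed

lemma card_short_gaps_le: "card (short_gaps T) \<le> (card D - 1) * card P * T"
proof -
  define f where "f = (\<lambda>((a, d), k). (k, a * (point k + d), gap a d k))"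
  have "inj_on f (short_gaps T)"
  proof (rule inj_onI)
    fix x y assume "x \<in> short_gaps T" "y \<in> short_gaps T" "f x = f y"
    then obtain a d a' d' k where "x = ((a, d), k)" "y = ((a', d'), k)"
      "a \<in> B" "a' \<in> B" "d \<in> D" "d' \<in> D" "Suc k < card D"
      "a * (point k + d) = a' * (point k + d')" "gap a d k = gap a' d' k"
      unfolding short_gaps_def f_def by auto
    then show "x = y" using gap_determines_scaled_shift by metis
  qed
  moreover have "f ` short_gaps T \<subseteq> {..<card D - 1} \<times> P \<times> {..<T}"
    using point_mem scaled_shift_mem by (auto simp: short_gaps_def f_def)
  ultimately have "card (short_gaps T) \<le> card ({..<card D - 1} \<times> P \<times> {..<T})"
    using finite_P by (intro card_inj_on_le) auto
  then show ?thesis by (simp add: card_cartesian_product)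
qed

theorem card_scaled_shifts_bound:
  "real (card B) * real (card D) * (real (card D) - 1) \<le> 6 * real (card P) ^ 2"
proof (cases "B = {} \<or> card D \<le> 1")
  case True
  then have "real (card D) * (real (card D) - 1) \<le> 0 \<or> card B = 0"
    by (auto simp: mult_le_0_iff)
  then have "real (card B) * (real (card D) * (real (card D) - 1)) \<le> 0"
    by (auto intro: mult_nonneg_nonpos)
  also have "0 \<le> 6 * real (card P) ^ 2" by simp
  finally show ?thesis by (simp add: mult.assoc)
next
  case False
  define m where "m = card D - 1"
  have "real m \<le> real (card P)" using card_D_le_card_P False by (simp add: m_def)
  moreover have "real (card B * card D) * (real m * real T - real (card P))
      \<le> real m * real (card P) * real T ^ 2"
    if "0 < T" for T :: nat
  proof -
    have "card B * card D * m * T \<le> m * card P * T * T + card B * card D * card P"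
      using card_short_gaps_ge[of T] card_short_gaps_le[of T] unfolding m_def[symmetric]
      by (meson add_le_mono1 mult_le_mono1 order_trans)
    then have "real (card B * card D * m * T) \<le> real (m * card P * T * T + card B * card D * card P)"
      by (simp only: of_nat_le_iff)
    then show ?thesis by (simp add: algebra_simps power2_eq_square)
  qed
  ultimately have "real (card B * card D) * real m \<le> 6 * real (card P) ^ 2"
    using False by (intro threshold_choice) (auto simp: m_def)
  moreover have "real m = real (card D) - 1" using False by (simp add: m_def)
  ultimately show ?thesis by simp
qed

end

lemma card_nonzero_mult_sumset_bound:
  assumes "finite A"
  shows "real (card {a \<in> A. a \<noteq> 0}) * real (card (sumset A)) * (real (card (sumset A)) - 1)
    \<le> 12 * real (card (prod_quad_sumset A)) ^ 2"
proof -
  interpret pos: scaled_shifts "{a \<in> A. 0 < a}" "sumset A" "prod_quad_sumset A"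
    using assms by unfold_locales
      (auto simp: finite_sumset finite_prod_quad_sumset mult_add_sumset_mem_prod_quad_sumset)
  interpret neg: scaled_shifts "uminus ` {a \<in> A. a < 0}" "uminus ` sumset A" "prod_quad_sumset A"
  proof unfold_locales
    fix a x d assume "a \<in> uminus ` {a \<in> A. a < 0}" "x \<in> uminus ` sumset A" "d \<in> uminus ` sumset A"
    then show "a * (x + d) \<in> prod_quad_sumset A"
      using mult_add_sumset_mem_prod_quad_sumset[of "-a" A "-x" "-d"] by (auto simp: algebra_simps)
  qed (use assms in \<open>auto simp: finite_sumset finite_prod_quad_sumset\<close>)
  have "{a \<in> A. a \<noteq> 0} = {a \<in> A. 0 < a} \<union> {a \<in> A. a < 0}" by auto
  then have "card {a \<in> A. a \<noteq> 0} = card {a \<in> A. 0 < a} + card (uminus ` {a \<in> A. a < 0})"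
    using assms by (simp add: card_Un_disjoint card_image disjoint_iff)
  moreover have "card (uminus ` sumset A) = card (sumset A)" by (simp add: card_image)
  ultimately show ?thesis
    using pos.card_scaled_shifts_bound neg.card_scaled_shifts_bound by (simp add: algebra_simps)
qed

lemma card_mult_card_sumset_squared_le:
  assumes "finite A" and "2 \<le> card (sumset A)"
  shows "real (card A) * real (card (sumset A)) ^ 2 \<le> 48 * real (card (prod_quad_sumset A)) ^ 2"
proof -
  define n s where "n = real (card A)" and "s = real (card (sumset A))"
  have "card (sumset A) \<le> card A ^ 2" using assms(1) by (rule card_sumset_le)
  have "2 \<le> card A"
  proof (rule ccontr)
    assume "\<not> 2 \<le> card A"
    then have "card A ^ 2 \<le> 1 ^ 2" by (intro power_mono) auto
    with \<open>card (sumset A) \<le> card A ^ 2\<close> assms(2) show False by simp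
  qed
  then have "2 \<le> n" unfolding n_def by simp
  have "A \<subseteq> {a \<in> A. a \<noteq> 0} \<union> {0}" by auto
  then have "card A \<le> card {a \<in> A. a \<noteq> 0} + 1"
    using assms(1) card_mono[of "{a \<in> A. a \<noteq> 0} \<union> {0}" A] card_Un_le[of "{a \<in> A. a \<noteq> 0}" "{0}"]
    by simp
  then have "n / 2 \<le> real (card {a \<in> A. a \<noteq> 0})" using \<open>2 \<le> n\<close> unfolding n_def by linarith
  moreover have "s / 2 \<le> s - 1" using assms(2) unfolding s_def by simp
  ultimately have "n / 2 * s * (s / 2) \<le> real (card {a \<in> A. a \<noteq> 0}) * s * (s - 1)"
    using \<open>2 \<le> n\<close> assms(2) unfolding s_def by (intro mult_mono) auto
  with card_nonzero_mult_sumset_bound[OF assms(1)] show ?thesis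
    unfolding n_def s_def by (simp add: power2_eq_square)
qed

lemma le_mult_powr_three_halves:
  fixes s n c :: real
  assumes "0 \<le> c" "0 < n" "n * s ^ 2 \<le> c ^ 2 * n ^ 4"
  shows "s \<le> c * n powr (3/2)"
proof (rule power2_le_imp_le)
  have "(n powr (3/2)) ^ 2 = n ^ 3"
    using \<open>0 < n\<close> by (simp add: power2_eq_square powr_add[symmetric] powr_numeral)
  moreover have "n * s ^ 2 \<le> n * (c ^ 2 * n ^ 3)"
    using assms(3) by (simp add: algebra_simps power_numeral_reduce)
  ultimately show "s ^ 2 \<le> (c * n powr (3/2)) ^ 2"
    using \<open>0 < n\<close> by (simp add: power_mult_distrib)
  show "0 \<le> c * n powr (3/2)" using \<open>0 \<le> c\<close> by simp
qed

lemma card_sumset_le_mult_powr: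
  assumes "finite A" "2 \<le> card (sumset A)" "0 \<le> K"
    and small: "real (card (prod_quad_sumset A)) \<le> K * real (card A) ^ 2"
  shows "real (card (sumset A)) \<le> 7 * K * real (card A) powr (3/2)"
proof (rule le_mult_powr_three_halves)
  show "0 < real (card A)"
    using card_sumset_le[OF assms(1)] assms(2) by (cases "card A") auto
  have "real (card (prod_quad_sumset A)) ^ 2 \<le> (K * real (card A) ^ 2) ^ 2"
    using small by (intro power_mono) auto
  then have "real (card A) * real (card (sumset A)) ^ 2 \<le> 48 * (K * real (card A) ^ 2) ^ 2"
    using card_mult_card_sumset_squared_le[OF assms(1,2)] by linarith
  also have "\<dots> \<le> (7 * K) ^ 2 * real (card A) ^ 4"
    by (simp add: power_mult_distrib flip: power_mult)
  finally show "real (card A) * real (card (sumset A)) ^ 2 \<le> (7 * K) ^ 2 * real (card A) ^ 4" .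
qed (use assms(3) in simp)

theorem theorem3p4:
  fixes K :: real
  assumes "K > 0"
  shows "\<exists>C1 > 0. \<forall>A :: real set. finite A \<longrightarrow>
           real (card (prod_quad_sumset A)) \<le> K * real (card A) ^ 2 \<longrightarrow>
           real (card (sumset A)) \<le> C1 * real (card A) powr (3/2)"
proof (intro exI[of _ "7 * K + 1"] conjI allI impI)
  show "0 < 7 * K + 1" using assms by simp
  fix A :: "real set"
  assume "finite A" and small: "real (card (prod_quad_sumset A)) \<le> K * real (card A) ^ 2"
  show "real (card (sumset A)) \<le> (7 * K + 1) * real (card A) powr (3/2)"
  proof (cases "card (sumset A) \<le> 1")
    case True
    show ?thesis
    proof (cases "A = {}")
      case False
      then have "1 \<le> real (card A) powr (3/2)"
        using \<open>finite A\<close> by (simp add: card_gt_0_iff Suc_le_eq ge_one_powr_ge_zero)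
      then have "1 * 1 \<le> (7 * K + 1) * real (card A) powr (3/2)"
        using assms by (intro mult_mono) auto
      then show ?thesis using \<open>card (sumset A) \<le> 1\<close> by simp
    qed (simp add: sumset_def)
  next
    case False
    then have "real (card (sumset A)) \<le> 7 * K * real (card A) powr (3/2)"
      using \<open>finite A\<close> assms small by (intro card_sumset_le_mult_powr) auto
    also have "\<dots> \<le> (7 * K + 1) * real (card A) powr (3/2)"
      by (simp add: distrib_right)
    finally show ?thesis .
  qed
qed

end
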